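(* Let $f$ be a holomorphic self-map of the unit ball $\mathbb{B}^N\subset\mathbb{C}^N$ with $f(0)=0$ that is not unitary on any slice. Fix $r_0\in(0,1)$ and define $M(r)=\max\{\|f(Z)\|:\|Z\|\le r\}$ for $r\in[r_0,1)$. Then there exists $c=c(r_0)<1$ such that $\frac{1-r}{1-M(r)}\le c$ for all $r\in[r_0,1)$.
   Context: A holomorphic map $f:\mathbb{B}^N\to\mathbb{B}^N$ is unitary on a slice if there exist $\zeta,\eta\in\partial\mathbb{B}^N$ with $f(\lambda\zeta)=\lambda\eta$ for all $\lambda$ in the unit disc of $\mathbb{C}$. *)

theory Defs
  imports "HOL-Analysis.Analysis"
begin

definition holomorphic_vec_on :: "(complex^'n \<Rightarrow> complex^'m) \<Rightarrow> (complex^'n) set \<Rightarrow> bool" where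
  "holomorphic_vec_on f S \<longleftrightarrow>
     (\<forall>z\<in>S. \<exists>L. (f has_derivative L) (at z) \<and> (\<forall>c x. L (c *s x) = c *s L x))"

definition unitary_on_slice :: "(complex^'n \<Rightarrow> complex^'n) \<Rightarrow> bool" where
  "unitary_on_slice f \<longleftrightarrow>
     (\<exists>\<zeta> \<eta>. norm \<zeta> = 1 \<and> norm \<eta> = 1 \<and> (\<forall>t::complex. norm t < 1 \<longrightarrow> f (t *s \<zeta>) = t *s \<eta>))"

end

theory Submission
  imports Defs "HOL-Complex_Analysis.Riemann_Mapping"
begin

text \<open>
  For unit vectors \<open>\<zeta>\<close> and \<open>|w| \<le> 1\<close> the slice \<open>t \<mapsto> \<langle>f(t\<zeta>), w\<rangle>\<close> is a holomorphic
  self-map of the disc fixing 0, with derivative \<open>\<langle>f'(0)\<zeta>, w\<rangle>\<close> at 0. If \<open>|f'(0)\<zeta>| \<ge> 1\<close>,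
  the Schwarz lemma makes the slice in the direction \<open>w = f'(0)\<zeta>/|f'(0)\<zeta>|\<close> the identity,
  and then \<open>|f(t\<zeta>)| \<le> |t|\<close> forces \<open>f(t\<zeta>) = tw\<close>: f is unitary on a slice. So, by
  compactness of the sphere, \<open>|f'(0)\<zeta>| \<le> a < 1\<close> for all unit \<open>\<zeta>\<close>.
  Writing a slice as \<open>g(t) = t h(t)\<close>, h is a self-map of the disc with \<open>|h(0)| \<le> a\<close>, and
  Schwarz-Pick (composing h with a Moebius map) gives \<open>1 - |h(t)| \<ge> k (1 - |t|)\<close> with
  \<open>k = (1 - a\<^sup>2)/8\<close>. Hence \<open>M(r) \<le> r (1 - k (1 - r))\<close>, i.e. \<open>1 - M(r) \<ge> (1 - r)(1 + k r)\<close>,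
  and the ratio is at most \<open>1 / (1 + k r\<^sub>0)\<close>.
\<close>

definition cinner :: "complex^'n \<Rightarrow> complex^'n \<Rightarrow> complex" where
  "cinner x y = (\<Sum>i\<in>UNIV. x$i * cnj (y$i))"

lemma Re_cinner: "Re (cinner x y) = inner x y"
  by (simp add: cinner_def inner_vec_def Re_sum inner_complex_def)

lemma cinner_zero_left [simp]: "cinner 0 y = 0"
  by (simp add: cinner_def)

lemma cinner_add_left: "cinner (x + z) y = cinner x y + cinner z y"
  by (simp add: cinner_def sum.distrib algebra_simps)

lemma cinner_smult_left: "cinner (c *s x) y = c * cinner x y"
  by (simp add: cinner_def sum_distrib_left mult.assoc)

lemma cinner_smult_right: "cinner x (c *s y) = cnj c * cinner x y"
  by (simp add: cinner_def sum_distrib_left algebra_simps)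

lemma of_real_smult_vec: "complex_of_real r *s x = r *\<^sub>R x"
  by (vector scaleR_conv_of_real)

lemma cinner_self: "cinner x x = of_real ((norm x)^2)"
proof -
  have "cinner x x = (\<Sum>i\<in>UNIV. complex_of_real ((cmod (x$i))^2))"
    unfolding cinner_def by (rule sum.cong) (simp_all only: complex_norm_square)
  also have "\<dots> = of_real ((norm x)^2)"
    by (simp add: norm_vec_def L2_set_def sum_nonneg)
  finally show ?thesis .
qed

lemma cinner_sgn_right: "cinner x (sgn x) = of_real (norm x)"
proof -
  have "cinner x (sgn x) = of_real (inverse (norm x)) * of_real ((norm x)^2)"
    by (simp add: sgn_vec_def cinner_smult_right cinner_self flip: of_real_smult_vec)
  then show ?thesis
    by (cases "x = 0") (simp_all add: power2_eq_square)
qed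

lemma of_real_norm_smult_sgn: "complex_of_real (norm x) *s sgn x = x"
  by (cases "x = 0") (simp_all add: of_real_smult_vec sgn_div_norm)

lemma norm_smult_vec: "norm (c *s (x::complex^'n)) = cmod c * norm x"
  by (simp add: norm_vec_def L2_set_right_distrib norm_mult)

lemma norm_cinner_le: "cmod (cinner x y) \<le> norm x * norm y"
proof (cases "cinner x y = 0")
  case False
  define p where "p = cnj (cinner x y) / of_real (cmod (cinner x y))"
  have "cinner (p *s x) y = of_real (cmod (cinner x y))"
    using False by (simp add: cinner_smult_left p_def field_simps)
      (metis complex_norm_square of_real_mult power2_eq_square)
  then have "cmod (cinner x y) = inner (p *s x) y"
    by (metis Re_cinner Re_complex_of_real)
  also have "\<dots> \<le> norm (p *s x) * norm y"
    by (rule norm_cauchy_schwarz)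
  also have "\<dots> = norm x * norm y"
    using False by (simp add: norm_smult_vec p_def norm_divide)
  finally show ?thesis .
qed simp

lemma bounded_linear_cinner_left: "bounded_linear (\<lambda>x. cinner x w)"
proof (rule bounded_linear_intro[where K="norm w"])
  show "cinner (r *\<^sub>R x) w = r *\<^sub>R cinner x w" for r x
    unfolding of_real_smult_vec[symmetric] cinner_smult_left by (simp add: scaleR_conv_of_real)
qed (simp_all add: cinner_add_left norm_cinner_le)

lemma bounded_linear_smult_vec: "bounded_linear (\<lambda>c::complex. c *s (z::complex^'n))"
proof (rule bounded_linear_intro[where K="norm z"])
  show "(r *\<^sub>R c) *s z = r *\<^sub>R (c *s z)" for r c
    by (vector scaleR_conv_of_real)
qed (simp_all add: vector_sadd_rdistrib norm_smult_vec)

lemma eq_if_norm_le_and_cinner_eq: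
  assumes "norm x \<le> norm y" and "cinner x y = of_real ((norm y)^2)"
  shows "x = y"
proof -
  have "inner x y = (norm y)^2"
    using assms(2) by (metis Re_cinner Re_complex_of_real)
  moreover have "(norm x)^2 \<le> (norm y)^2"
    using assms(1) by (simp add: power_mono)
  ultimately have "(norm (x - y))^2 \<le> 0"
    using dot_norm_neg[of x y] by (simp add: field_simps)
  then show ?thesis
    by simp
qed

lemma deriv_0_if_linear_on_ball:
  assumes "\<And>z. cmod z < 1 \<Longrightarrow> g z = \<alpha> * z"
  shows "deriv g 0 = \<alpha>"
proof -
  have "((\<lambda>z. \<alpha> * z) has_field_derivative \<alpha>) (at 0)"
    by (auto intro!: derivative_eq_intros)
  then have "(g has_field_derivative \<alpha>) (at 0)"
    by (rule has_field_derivative_transform_within_open[where S="ball 0 1"]) (auto simp: assms)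
  then show ?thesis
    by (rule DERIV_imp_deriv)
qed

lemma Schwarz_Lemma_strict:
  fixes g :: "complex \<Rightarrow> complex"
  assumes "g holomorphic_on ball 0 1" and "g 0 = 0"
    and "\<And>z. cmod z < 1 \<Longrightarrow> cmod (g z) < 1"
    and "cmod (deriv g 0) < 1" and "cmod u < 1" and "u \<noteq> 0"
  shows "cmod (g u) < cmod u"
proof -
  have "cmod (g u) \<noteq> cmod u"
  proof
    assume "cmod (g u) = cmod u"
    then have "\<exists>z. cmod z < 1 \<and> z \<noteq> 0 \<and> cmod (g z) = cmod z"
      using assms(5,6) by blast
    then obtain \<alpha> where "\<forall>z. cmod z < 1 \<longrightarrow> g z = \<alpha> * z" and "cmod \<alpha> = 1"
      using Schwarz_Lemma(3)[OF assms(1-3,5)] by blast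
    then have "deriv g 0 = \<alpha>"
      by (intro deriv_0_if_linear_on_ball) simp
    then show False
      using assms(4) \<open>cmod \<alpha> = 1\<close> by simp
  qed
  then show ?thesis
    using Schwarz_Lemma(1)[OF assms(1-3,5)] by simp
qed

lemma Schwarz_Lemma_deriv_eq_1:
  fixes g :: "complex \<Rightarrow> complex"
  assumes "g holomorphic_on ball 0 1" and "g 0 = 0"
    and "\<And>z. cmod z < 1 \<Longrightarrow> cmod (g z) < 1"
    and "deriv g 0 = 1" and "cmod t < 1"
  shows "g t = t"
proof -
  obtain \<alpha> where \<alpha>: "\<forall>z. cmod z < 1 \<longrightarrow> g z = \<alpha> * z"
    using Schwarz_Lemma(3)[OF assms(1-3), of 0] assms(4) by auto
  then have "deriv g 0 = \<alpha>"
    by (intro deriv_0_if_linear_on_ball) simp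
  then show ?thesis
    using \<alpha> assms(4,5) by simp
qed

lemma Schwarz_factor:
  fixes g :: "complex \<Rightarrow> complex"
  assumes "g holomorphic_on ball 0 1" and "g 0 = 0"
    and "\<And>z. cmod z < 1 \<Longrightarrow> cmod (g z) < 1" and "cmod (deriv g 0) < 1"
  obtains h where "h holomorphic_on ball 0 1" and "\<And>z. cmod z < 1 \<Longrightarrow> g z = z * h z"
    and "deriv g 0 = h 0" and "\<And>z. cmod z < 1 \<Longrightarrow> cmod (h z) < 1"
proof -
  obtain h where hol: "h holomorphic_on ball 0 1"
    and gh: "\<And>z. cmod z < 1 \<Longrightarrow> g z = z * h z" and h0: "deriv g 0 = h 0"
    using Schwarz3[OF assms(1,2)] by blast
  have "cmod (h z) < 1" if z: "cmod z < 1" for z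
  proof (cases "z = 0")
    case False
    then have "cmod z * cmod (h z) < cmod z * 1"
      using Schwarz_Lemma_strict[OF assms z] gh[OF z] by (simp add: norm_mult)
    then show ?thesis
      using False by simp
  qed (use assms(4) h0 in simp)
  with hol gh h0 show ?thesis
    by (rule that)
qed

lemma Moebius_function_one_minus_norm_sq:
  assumes "1 - cnj w * z \<noteq> 0"
  shows "1 - cmod (Moebius_function t w z) ^ 2 =
         (1 - cmod w ^ 2) / cmod (1 - cnj w * z) ^ 2 * (1 - cmod z ^ 2)"
proof -
  have "1 - w * cnj z \<noteq> 0"
    using assms by (metis complex_cnj_cnj complex_cnj_mult complex_cnj_one right_minus_eq)
  then show ?thesis
    using assms
    apply (cases w, cases z)
    apply (simp add: Moebius_function_def divide_simps norm_divide norm_mult)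
    apply (simp add: complex_norm complex_diff complex_mult one_complex.code complex_cnj)
    apply (auto simp: algebra_simps power2_eq_square)
    done
qed

lemma Moebius_function_distance_to_circle:
  assumes "cmod b \<le> a" and "a < 1" and "cmod u \<le> cmod z" and "cmod z < 1"
  shows "(1 - a^2) / 4 * (1 - cmod z) \<le> 1 - cmod (Moebius_function 0 (-b) u) ^ 2"
proof -
  let ?d = "1 - cnj (-b) * u"
  have a0: "0 \<le> a"
    using assms(1) norm_ge_zero order_trans by blast
  have bu: "cmod (cnj (-b) * u) < 1"
    using norm_mult_less[of "cnj (-b)" 1 u 1] assms by simp
  have "?d \<noteq> 0"
  proof
    assume "?d = 0"
    then have "cnj (-b) * u = 1"
      unfolding right_minus_eq by (rule sym)
    with bu show False
      by (simp only: norm_one)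
  qed
  have "cmod ?d \<le> 2"
    using norm_triangle_ineq4[of 1 "cnj (-b) * u"] bu by simp
  then have "cmod ?d ^ 2 \<le> 2 ^ 2"
    by (rule power_mono) simp
  moreover have "a^2 \<le> 1" "cmod b ^ 2 \<le> a^2"
    using a0 assms(1,2) by (simp_all add: power_le_one power_mono)
  ultimately have A: "(1 - a^2) / 4 \<le> (1 - cmod b ^ 2) / cmod ?d ^ 2"
    using \<open>?d \<noteq> 0\<close> by (intro frac_le) auto
  have "cmod u * cmod u \<le> cmod u * 1"
    using assms(3,4) by (intro mult_left_mono) auto
  then have B: "1 - cmod z \<le> 1 - cmod u ^ 2"
    using assms(3) by (simp add: power2_eq_square)
  have "(1 - a^2) / 4 * (1 - cmod z) \<le> (1 - cmod b ^ 2) / cmod ?d ^ 2 * (1 - cmod u ^ 2)"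
    using A B \<open>a^2 \<le> 1\<close> assms(4) by (intro mult_mono') auto
  also have "\<dots> = 1 - cmod (Moebius_function 0 (-b) u) ^ 2"
    using Moebius_function_one_minus_norm_sq[OF \<open>?d \<noteq> 0\<close>] by simp
  finally show ?thesis .
qed

lemma disc_self_map_distance_to_circle:
  fixes h :: "complex \<Rightarrow> complex"
  assumes hol: "h holomorphic_on ball 0 1" and hb: "\<And>z. cmod z < 1 \<Longrightarrow> cmod (h z) < 1"
    and "cmod (h 0) \<le> a" and "a < 1" and z: "cmod z < 1"
  shows "(1 - a^2) / 8 * (1 - cmod z) \<le> 1 - cmod (h z)"
proof -
  define b where "b = h 0"
  have b1: "cmod b < 1"
    using assms by (simp add: b_def)
  define \<psi> where "\<psi> = Moebius_function 0 b \<circ> h"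
  have "\<psi> holomorphic_on ball 0 1"
    unfolding \<psi>_def using hb
    by (intro holomorphic_on_compose_gen[OF hol Moebius_function_holomorphic[OF b1]]) auto
  moreover have "\<psi> 0 = 0"
    by (simp add: \<psi>_def b_def Moebius_function_eq_zero)
  moreover have "cmod (\<psi> u) < 1" if "cmod u < 1" for u
    unfolding \<psi>_def o_def by (rule Moebius_function_norm_lt_1[OF b1 hb[OF that]])
  ultimately have \<psi>z: "cmod (\<psi> z) \<le> cmod z"
    using z by (rule Schwarz_Lemma(1))
  have "h z = Moebius_function 0 (-b) (\<psi> z)"
    unfolding \<psi>_def o_def by (rule Moebius_function_compose[symmetric]) (use b1 hb z in auto)
  then have "(1 - a^2) / 4 * (1 - cmod z) \<le> 1 - cmod (h z) ^ 2"
    using Moebius_function_distance_to_circle[OF _ assms(4) \<psi>z z] assms(3) b_def by simp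
  also have "\<dots> = (1 - cmod (h z)) * (1 + cmod (h z))"
    by (simp add: power2_eq_square algebra_simps)
  also have "\<dots> \<le> (1 - cmod (h z)) * 2"
    using hb[OF z] by (intro mult_left_mono) auto
  finally show ?thesis
    by simp
qed

lemma Schwarz_Lemma_quantitative:
  fixes g :: "complex \<Rightarrow> complex"
  assumes "g holomorphic_on ball 0 1" and "g 0 = 0"
    and "\<And>z. cmod z < 1 \<Longrightarrow> cmod (g z) < 1"
    and "cmod (deriv g 0) \<le> a" and "a < 1" and z: "cmod z < 1"
  shows "cmod (g z) \<le> cmod z * (1 - (1 - a^2) / 8 * (1 - cmod z))"
proof -
  have "cmod (deriv g 0) < 1"
    using assms(4,5) by linarith
  then obtain h where hol: "h holomorphic_on ball 0 1"
    and gh: "\<And>z. cmod z < 1 \<Longrightarrow> g z = z * h z" and h0: "deriv g 0 = h 0" and hb: "\<And>z. cmod z < 1 \<Longrightarrow> cmod (h z) < 1"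
    using Schwarz_factor[OF assms(1-3)] by blast
  have "(1 - a^2) / 8 * (1 - cmod z) \<le> 1 - cmod (h z)"
    by (rule disc_self_map_distance_to_circle[OF hol hb assms(4)[unfolded h0] assms(5) z])
  then have "cmod z * cmod (h z) \<le> cmod z * (1 - (1 - a^2) / 8 * (1 - cmod z))"
    by (intro mult_left_mono) auto
  then show ?thesis
    using gh[OF z] by (simp add: norm_mult)
qed

lemma has_field_derivative_slice:
  fixes f :: "complex^'n \<Rightarrow> complex^'n"
  assumes "(f has_derivative L) (at (t *s \<zeta>))" and "\<And>c x. L (c *s x) = c *s L x"
  shows "((\<lambda>t. cinner (f (t *s \<zeta>)) w) has_field_derivative cinner (L \<zeta>) w) (at t)"
proof -
  have "((\<lambda>c. c *s \<zeta>) has_derivative (\<lambda>c. c *s \<zeta>)) (at t)"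
    by (rule bounded_linear_imp_has_derivative[OF bounded_linear_smult_vec])
  from has_derivative_compose[OF this assms(1)]
  have "((\<lambda>t. cinner (f (t *s \<zeta>)) w) has_derivative (\<lambda>c. cinner (L (c *s \<zeta>)) w)) (at t)"
    by (rule bounded_linear.has_derivative[OF bounded_linear_cinner_left])
  moreover have "(\<lambda>c. cinner (L (c *s \<zeta>)) w) = (\<lambda>c. cinner (L \<zeta>) w * c)"
    by (simp add: assms(2) cinner_smult_left mult.commute)
  ultimately show ?thesis
    by (simp add: has_field_derivative_def)
qed

lemma norm_smult_le: "norm \<zeta> \<le> 1 \<Longrightarrow> norm (t *s \<zeta>) \<le> cmod t"
  by (simp add: norm_smult_vec mult_left_le)

lemma holomorphic_on_slice:
  fixes f :: "complex^'n \<Rightarrow> complex^'n"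
  assumes "holomorphic_vec_on f (ball 0 1)" and "norm \<zeta> \<le> 1"
  shows "(\<lambda>t. cinner (f (t *s \<zeta>)) w) holomorphic_on ball 0 1"
  unfolding holomorphic_on_def field_differentiable_def
proof
  fix t :: complex
  assume "t \<in> ball 0 1"
  then have "t *s \<zeta> \<in> ball 0 1"
    using norm_smult_le[OF assms(2), of t] by simp
  then obtain L where "(f has_derivative L) (at (t *s \<zeta>))" "\<forall>c x. L (c *s x) = c *s L x"
    using assms(1) unfolding holomorphic_vec_on_def by blast
  then have "((\<lambda>t. cinner (f (t *s \<zeta>)) w) has_field_derivative cinner (L \<zeta>) w) (at t)"
    by (intro has_field_derivative_slice) auto
  then show "\<exists>f'. ((\<lambda>t. cinner (f (t *s \<zeta>)) w) has_field_derivative f') (at t within ball 0 1)"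
    by (blast intro: has_field_derivative_at_within)
qed

lemma norm_slice_lt_1:
  fixes f :: "complex^'n \<Rightarrow> complex^'n"
  assumes "f ` ball 0 1 \<subseteq> ball 0 1" and "norm \<zeta> \<le> 1" and "norm w \<le> 1" and "cmod t < 1"
  shows "cmod (cinner (f (t *s \<zeta>)) w) < 1"
proof -
  have "t *s \<zeta> \<in> ball 0 1"
    using assms(4) norm_smult_le[OF assms(2), of t] by simp
  then have "f (t *s \<zeta>) \<in> ball 0 1"
    using assms(1) by blast
  then have "norm (f (t *s \<zeta>)) < 1"
    by simp
  then have "norm (f (t *s \<zeta>)) * norm w < 1"
    using mult_left_le[OF assms(3) norm_ge_zero[of "f (t *s \<zeta>)"]] by linarith
  then show ?thesis
    using norm_cinner_le[of "f (t *s \<zeta>)" w] by linarith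
qed

lemma deriv_slice:
  fixes f :: "complex^'n \<Rightarrow> complex^'n"
  assumes "(f has_derivative L) (at 0)" and "\<And>c x. L (c *s x) = c *s L x"
  shows "deriv (\<lambda>t. cinner (f (t *s \<zeta>)) w) 0 = cinner (L \<zeta>) w"
  by (rule DERIV_imp_deriv, rule has_field_derivative_slice) (use assms in auto)

lemma ball_self_map_Schwarz:
  fixes f :: "complex^'n \<Rightarrow> complex^'n"
  assumes "holomorphic_vec_on f (ball 0 1)" and "f ` ball 0 1 \<subseteq> ball 0 1" and "f 0 = 0"
    and "norm Z < 1"
  shows "norm (f Z) \<le> norm Z"
proof -
  define g where "g = (\<lambda>t. cinner (f (t *s sgn Z)) (sgn (f Z)))"
  have sgn: "norm (sgn Z) \<le> 1" "norm (sgn (f Z)) \<le> 1"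
    by (simp_all add: norm_sgn)
  have g_hol: "g holomorphic_on ball 0 1"
    unfolding g_def using assms(1) sgn(1) by (simp add: holomorphic_on_slice)
  have g0: "g 0 = 0"
    using assms(3) by (simp add: g_def)
  have g_bound: "cmod (g t) < 1" if "cmod t < 1" for t
    unfolding g_def using assms(2) sgn that by (simp add: norm_slice_lt_1)
  have "cmod (g (of_real (norm Z))) \<le> cmod (of_real (norm Z))"
    using Schwarz_Lemma(1)[OF g_hol g0 g_bound, of "of_real (norm Z)"] assms(4) by simp
  then show ?thesis
    by (simp add: g_def of_real_norm_smult_sgn cinner_sgn_right)
qed

lemma unitary_on_sliceI:
  fixes f :: "complex^'n \<Rightarrow> complex^'n"
  assumes "norm \<zeta> = 1" and "norm w = 1"
    and slice: "\<And>t. cmod t < 1 \<Longrightarrow> cinner (f (t *s \<zeta>)) w = t"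
    and Schwarz: "\<And>Z. norm Z < 1 \<Longrightarrow> norm (f Z) \<le> norm Z"
  shows "unitary_on_slice f"
  unfolding unitary_on_slice_def
proof (intro exI conjI allI impI)
  fix t :: complex
  assume t: "cmod t < 1"
  show "f (t *s \<zeta>) = t *s w"
  proof (rule eq_if_norm_le_and_cinner_eq)
    show "norm (f (t *s \<zeta>)) \<le> norm (t *s w)"
      using Schwarz[of "t *s \<zeta>"] t assms(1,2) by (simp add: norm_smult_vec)
    have "cinner (f (t *s \<zeta>)) (t *s w) = of_real ((cmod t)^2)"
      by (simp only: cinner_smult_right slice[OF t] complex_norm_square) (simp add: mult.commute)
    then show "cinner (f (t *s \<zeta>)) (t *s w) = of_real ((norm (t *s w))^2)"
      using assms(2) by (simp add: norm_smult_vec)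
  qed
qed (use assms in auto)

lemma norm_derivative_lt_1:
  fixes f :: "complex^'n \<Rightarrow> complex^'n"
  assumes hol: "holomorphic_vec_on f (ball 0 1)" and map: "f ` ball 0 1 \<subseteq> ball 0 1"
    and "f 0 = 0" and "\<not> unitary_on_slice f"
    and L: "(f has_derivative L) (at 0)" and lin: "\<And>c x. L (c *s x) = c *s L x"
    and \<zeta>: "norm \<zeta> = 1"
  shows "norm (L \<zeta>) < 1"
proof (rule ccontr)
  assume "\<not> norm (L \<zeta>) < 1"
  then have "L \<zeta> \<noteq> 0"
    by auto
  define w where "w = sgn (L \<zeta>)"
  define g where "g = (\<lambda>t. cinner (f (t *s \<zeta>)) w)"
  have w: "norm w = 1"
    using \<open>L \<zeta> \<noteq> 0\<close> by (simp add: w_def norm_sgn)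
  have g_hol: "g holomorphic_on ball 0 1"
    unfolding g_def using hol \<zeta> by (simp add: holomorphic_on_slice)
  have g0: "g 0 = 0"
    using \<open>f 0 = 0\<close> by (simp add: g_def)
  have g_bound: "cmod (g t) < 1" if "cmod t < 1" for t
    unfolding g_def using map \<zeta> w that by (simp add: norm_slice_lt_1)
  have dg: "deriv g 0 = of_real (norm (L \<zeta>))"
    unfolding g_def w_def by (simp add: deriv_slice[OF L lin] cinner_sgn_right)
  then have "norm (L \<zeta>) \<le> 1"
    using Schwarz_Lemma(2)[OF g_hol g0 g_bound, of 0] by simp
  then have "deriv g 0 = 1"
    using dg \<open>\<not> norm (L \<zeta>) < 1\<close> by simp
  then have "g t = t" if "cmod t < 1" for t
    using Schwarz_Lemma_deriv_eq_1[OF g_hol g0 g_bound _ that] by simp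
  then have "unitary_on_slice f"
    by (intro unitary_on_sliceI[OF \<zeta> w] ball_self_map_Schwarz[OF hol map \<open>f 0 = 0\<close>])
      (simp_all add: g_def)
  then show False
    using assms(4) by contradiction
qed

lemma ball_self_map_Schwarz_quantitative:
  fixes f :: "complex^'n \<Rightarrow> complex^'n"
  assumes hol: "holomorphic_vec_on f (ball 0 1)" and map: "f ` ball 0 1 \<subseteq> ball 0 1"
    and "f 0 = 0"
    and L: "(f has_derivative L) (at 0)" and lin: "\<And>c x. L (c *s x) = c *s L x"
    and La: "\<And>\<zeta>. norm \<zeta> = 1 \<Longrightarrow> norm (L \<zeta>) \<le> a" and "a < 1" and Z: "norm Z < 1"
  shows "norm (f Z) \<le> norm Z * (1 - (1 - a^2) / 8 * (1 - norm Z))"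
proof (cases "Z = 0")
  case False
  define g where "g = (\<lambda>t. cinner (f (t *s sgn Z)) (sgn (f Z)))"
  have sgn: "norm (sgn Z) = 1" "norm (sgn (f Z)) \<le> 1"
    using False by (simp_all add: norm_sgn)
  have g_hol: "g holomorphic_on ball 0 1"
    unfolding g_def using hol sgn(1) by (simp add: holomorphic_on_slice)
  have g0: "g 0 = 0"
    using \<open>f 0 = 0\<close> by (simp add: g_def)
  have g_bound: "cmod (g t) < 1" if "cmod t < 1" for t
    unfolding g_def using map sgn that by (simp add: norm_slice_lt_1)
  have "cmod (deriv g 0) \<le> norm (L (sgn Z)) * norm (sgn (f Z))"
    unfolding g_def deriv_slice[OF L lin] by (rule norm_cinner_le)
  also have "\<dots> \<le> a"
    using La[OF sgn(1)] mult_left_le[OF sgn(2) norm_ge_zero[of "L (sgn Z)"]] by linarith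
  finally have "cmod (g (of_real (norm Z))) \<le>
      cmod (of_real (norm Z)) * (1 - (1 - a^2) / 8 * (1 - cmod (of_real (norm Z))))"
    using Z by (intro Schwarz_Lemma_quantitative[OF g_hol g0 g_bound _ \<open>a < 1\<close>]) auto
  then show ?thesis
    by (simp add: g_def of_real_norm_smult_sgn cinner_sgn_right)
qed (simp add: \<open>f 0 = 0\<close>)

lemma mult_one_minus_mono:
  fixes k r s :: real
  assumes "0 \<le> k" and "k \<le> 1" and "0 \<le> s" and "s \<le> r"
  shows "s * (1 - k * (1 - s)) \<le> r * (1 - k * (1 - r))"
proof -
  have "0 \<le> (r - s) * (1 - k + k * (r + s))"
    using assms by (intro mult_nonneg_nonneg) auto
  also have "\<dots> = r * (1 - k * (1 - r)) - s * (1 - k * (1 - s))"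
    by algebra
  finally show ?thesis
    by simp
qed

lemma ball_self_map_contraction:
  fixes f :: "complex^'n \<Rightarrow> complex^'n"
  assumes hol: "holomorphic_vec_on f (ball 0 1)" and map: "f ` ball 0 1 \<subseteq> ball 0 1"
    and "f 0 = 0" and "\<not> unitary_on_slice f"
  obtains k where "0 < k"
    and "\<And>Z r. norm Z \<le> r \<Longrightarrow> r < 1 \<Longrightarrow> norm (f Z) \<le> r * (1 - k * (1 - r))"
proof -
  obtain L where L: "(f has_derivative L) (at 0)" and lin: "\<And>c x. L (c *s x) = c *s L x"
    using hol unfolding holomorphic_vec_on_def by fastforce
  have "continuous_on (sphere 0 1) (\<lambda>\<zeta>. norm (L \<zeta>))"
    using has_derivative_bounded_linear[OF L] by (intro continuous_on_norm linear_continuous_on)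
  from continuous_attains_sup[OF compact_sphere _ this]
  obtain \<zeta>\<^sub>0 where "\<zeta>\<^sub>0 \<in> sphere 0 1"
    and max: "\<And>\<zeta>. \<zeta> \<in> sphere 0 1 \<Longrightarrow> norm (L \<zeta>) \<le> norm (L \<zeta>\<^sub>0)"
    by auto
  define a where "a = norm (L \<zeta>\<^sub>0)"
  have "a < 1"
    unfolding a_def using \<open>\<zeta>\<^sub>0 \<in> sphere 0 1\<close> by (intro norm_derivative_lt_1[OF assms L lin]) simp
  have La: "norm (L \<zeta>) \<le> a" if "norm \<zeta> = 1" for \<zeta>
    unfolding a_def using that by (intro max) simp
  define k where "k = (1 - a^2) / 8"
  have "0 \<le> a"
    by (simp add: a_def)
  then have "0 \<le> a^2" "a^2 < 1"
    using \<open>a < 1\<close> by (simp_all add: power_less_one_iff)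
  have "8 * k = 1 - a^2"
    by (simp add: k_def)
  then have "0 < k" "k \<le> 1"
    using \<open>0 \<le> a^2\<close> \<open>a^2 < 1\<close> by linarith+
  have "norm (f Z) \<le> r * (1 - k * (1 - r))" if "norm Z \<le> r" "r < 1" for Z r
  proof -
    have "norm Z < 1"
      using that by linarith
    from ball_self_map_Schwarz_quantitative[OF hol map \<open>f 0 = 0\<close> L lin La \<open>a < 1\<close> this]
    have "norm (f Z) \<le> norm Z * (1 - k * (1 - norm Z))"
      unfolding k_def .
    also have "\<dots> \<le> r * (1 - k * (1 - r))"
      using that \<open>0 < k\<close> \<open>k \<le> 1\<close> by (intro mult_one_minus_mono) auto
    finally show ?thesis .
  qed
  with \<open>0 < k\<close> show ?thesis
    by (rule that)
qed

lemma ratio_le_of_contraction_bound: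
  fixes k r r\<^sub>0 M :: real
  assumes "0 < k" and "0 < r\<^sub>0" and "r\<^sub>0 \<le> r" and "r < 1"
    and "M \<le> r * (1 - k * (1 - r))"
  shows "(1 - r) / (1 - M) \<le> 1 / (1 + k * r\<^sub>0)"
proof -
  have kr: "0 < k * r\<^sub>0" "k * r\<^sub>0 \<le> k * r"
    using assms(1-3) by (simp_all add: mult_left_mono)
  have pos: "0 < (1 - r) * (1 + k * r)"
    using assms(4) kr by (intro mult_pos_pos) auto
  have "(1 - r) * (1 + k * r) \<le> 1 - M"
    using assms(5) by (simp add: algebra_simps)
  then have "(1 - r) / (1 - M) \<le> (1 - r) / ((1 - r) * (1 + k * r))"
    using pos assms(4) by (intro divide_left_mono) auto
  also have "\<dots> = 1 / (1 + k * r)"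
    using assms(4) by simp
  also have "\<dots> \<le> 1 / (1 + k * r\<^sub>0)"
    using kr by (intro divide_left_mono mult_pos_pos) auto
  finally show ?thesis .
qed

theorem mainTheorem4:
  fixes f :: "complex^'n \<Rightarrow> complex^'n" and r0 :: real
  assumes "holomorphic_vec_on f (ball 0 1)"
    and "f ` ball 0 1 \<subseteq> ball 0 1"
    and "f 0 = 0"
    and "\<not> unitary_on_slice f"
    and "0 < r0" and "r0 < 1"
  shows "\<exists>c<1. \<forall>r\<in>{r0..<1}.
           (1 - r) / (1 - Sup ((\<lambda>Z. norm (f Z)) ` cball 0 r)) \<le> c"
proof -
  obtain k where "0 < k"
    and bound: "\<And>Z r. norm Z \<le> r \<Longrightarrow> r < 1 \<Longrightarrow> norm (f Z) \<le> r * (1 - k * (1 - r))"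
    using ball_self_map_contraction[OF assms(1-4)] by blast
  show ?thesis
  proof (intro exI conjI ballI)
    show "1 / (1 + k * r0) < 1"
      using mult_pos_pos[OF \<open>0 < k\<close> \<open>0 < r0\<close>] by simp
    fix r
    assume r: "r \<in> {r0..<1}"
    have "Sup ((\<lambda>Z. norm (f Z)) ` cball 0 r) \<le> r * (1 - k * (1 - r))"
    proof (rule cSup_least)
      show "(\<lambda>Z. norm (f Z)) ` cball 0 r \<noteq> {}"
        using r \<open>0 < r0\<close> by simp
    qed (use r bound in auto)
    then show "(1 - r) / (1 - Sup ((\<lambda>Z. norm (f Z)) ` cball 0 r)) \<le> 1 / (1 + k * r0)"
      using r \<open>0 < k\<close> \<open>0 < r0\<close> by (intro ratio_le_of_contraction_bound) auto
  qed
qed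

end
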